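(* Let $\omega\in(0,\pi/2]$ and let $S$ be a moving sofa with rotation angle $\omega$ in standard position. Then $\mathcal{M}(S)=P_\omega\cap\bigcap_{0\le t\le\omega}L_S(t)$ is a moving sofa with rotation angle $\omega$, in standard position, and $S\subseteq\mathcal{M}(S)$.
   Context: For $t\in\mathbb{R}$ put $u_t=(\cos t,\sin t)$, $v_t=(-\sin t,\cos t)$; $R_t$ is counterclockwise rotation about the origin by $t$. For a nonempty compact $S$, $p_S(t)=\max_{p\in S}p\cdot u_t$. The hallway is $L=L_H\cup L_V$ with $L_H=(-\infty,1]\times[0,1]$, $L_V=[0,1]\times(-\infty,1]$. A moving sofa is a connected, nonempty, compact $S\subset\mathbb{R}^2$ such that some translate of $S$ lies in $L_H$ and can be moved by a continuous rigid motion inside $L$ to a subset of $L_V$; its rotation angle $\omega\in(0,\pi/2]$ is the total clockwise angle rotated in this motion (regarded as fixed data of the sofa). It is in standard position if $p_S(\omega)=p_S(\pi/2)=1$. Let $H=\mathbb{R}\times[0,1]$, $V=[0,1]\times\mathbb{R}$, $P_\omega=H\cap R_\omega(V)$, and $L_S(t)=R_t(L)+(p_S(t)-1)u_t+(p_S(t+\pi/2)-1)v_t$. *)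

theory Defs
  imports "HOL-Analysis.Analysis"
begin

type_synonym pt = "real \<times> real"

definition uvec :: "real \<Rightarrow> pt" where "uvec t = (cos t, sin t)"
definition vvec :: "real \<Rightarrow> pt" where "vvec t = (- sin t, cos t)"

definition rot :: "real \<Rightarrow> pt \<Rightarrow> pt" where
  "rot t p = (cos t * fst p - sin t * snd p, sin t * fst p + cos t * snd p)"

definition supp :: "pt set \<Rightarrow> real \<Rightarrow> real" where
  "supp S t = Sup ((\<lambda>p. p \<bullet> uvec t) ` S)"

definition LH :: "pt set" where "LH = {p. fst p \<le> 1 \<and> 0 \<le> snd p \<and> snd p \<le> 1}"
definition LV :: "pt set" where "LV = {p. 0 \<le> fst p \<and> fst p \<le> 1 \<and> snd p \<le> 1}"
definition hallway :: "pt set" where "hallway = LH \<union> LV"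

definition Hstrip :: "pt set" where "Hstrip = {p. 0 \<le> snd p \<and> snd p \<le> 1}"
definition Vstrip :: "pt set" where "Vstrip = {p. 0 \<le> fst p \<and> fst p \<le> 1}"

definition Pset :: "real \<Rightarrow> pt set" where "Pset \<omega> = Hstrip \<inter> rot \<omega> ` Vstrip"

text \<open>A moving sofa with rotation angle \<omega>: S is connected, nonempty, compact, and there is a
  continuous rigid motion (parametrized by s in [0,1]): at time s the sofa occupies
  rot (- theta s) ` S + x s (clockwise rotation by theta s, then translation), staying in the
  hallway, starting (theta 0 = 0) in L_H and ending in L_V with total clockwise rotation
  theta 1 = \<omega>.\<close>
definition moving_sofa :: "pt set \<Rightarrow> real \<Rightarrow> bool" where
  "moving_sofa S \<omega> \<longleftrightarrow> connected S \<and> S \<noteq> {} \<and> compact S \<and>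
     (\<exists>(\<theta>::real \<Rightarrow> real) (x::real \<Rightarrow> pt). continuous_on {0..1} \<theta> \<and> continuous_on {0..1} x \<and>
        \<theta> 0 = 0 \<and> \<theta> 1 = \<omega> \<and>
        (\<forall>s\<in>{0..1}. (\<lambda>p. rot (- \<theta> s) p + x s) ` S \<subseteq> hallway) \<and>
        (\<lambda>p. rot (- \<theta> 0) p + x 0) ` S \<subseteq> LH \<and>
        (\<lambda>p. rot (- \<theta> 1) p + x 1) ` S \<subseteq> LV)"

definition standard_position :: "pt set \<Rightarrow> real \<Rightarrow> bool" where
  "standard_position S \<omega> \<longleftrightarrow> supp S \<omega> = 1 \<and> supp S (pi/2) = 1"

definition LS :: "pt set \<Rightarrow> real \<Rightarrow> pt set" where
  "LS S t = (\<lambda>q. q + (supp S t - 1) *\<^sub>R uvec t + (supp S (t + pi/2) - 1) *\<^sub>R vvec t)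
              ` (rot t ` hallway)"

definition Msofa :: "pt set \<Rightarrow> real \<Rightarrow> pt set" where
  "Msofa S \<omega> = Pset \<omega> \<inter> (\<Inter>t\<in>{0..\<omega>}. LS S t)"

end

theory Submission
  imports Defs
begin

text \<open>
  At the moment the sofa has turned by \<open>t \<in> [0, \<omega>]\<close> it lies in a rotated and translated
  hallway, and \<open>L\<^sub>S(t)\<close> is the tightest such hallway, so \<open>S \<subseteq> L\<^sub>S(t)\<close>; the endpoints of the motion
  and the standard position put \<open>S\<close> into \<open>P\<^sub>\<omega>\<close>. The set \<open>\<M>(S)\<close> is closed
  and lies in a box, and it moves by turning uniformly while being translated along with
  \<open>L\<^sub>S(t)\<close>, a continuous motion because the support function is continuous.

  Connectedness: every \<open>m \<in> \<M>(S)\<close> is joined inside \<open>\<M>(S)\<close> by a segment to some \<open>z \<in> S\<close>.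
  Since \<open>m \<bullet> u\<^sub>0\<close> and \<open>m \<bullet> v\<^sub>\<omega>\<close> do not exceed their maxima over \<open>S\<close>, connectedness of \<open>S\<close>
  yields \<open>z \<in> S\<close> for which \<open>(z - m) \<bullet> u\<^sub>0\<close> and \<open>(z - m) \<bullet> v\<^sub>\<omega>\<close> do not have strictly
  opposite signs. Then for all \<open>t \<in> [0, \<omega>]\<close> both coordinates of \<open>z - m\<close> in the frame
  \<open>(u\<^sub>t, v\<^sub>t)\<close> have the same sign, so one endpoint dominates the other in that frame and the
  segment stays in \<open>L\<^sub>S(t)\<close>.
\<close>

lemma inner_uvec: "p \<bullet> uvec t = fst p * cos t + snd p * sin t"
  by (cases p) (simp add: uvec_def)

lemma inner_vvec: "p \<bullet> vvec t = snd p * cos t - fst p * sin t"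
  by (cases p) (simp add: vvec_def)

lemma uvec_vvec_orthonormal:
  "uvec t \<bullet> uvec t = 1" "vvec t \<bullet> vvec t = 1" "uvec t \<bullet> vvec t = 0" "vvec t \<bullet> uvec t = 0"
  by (simp_all add: uvec_def vvec_def flip: power2_eq_square)

lemma uvec_add_pi_half: "uvec (t + pi/2) = vvec t"
  by (simp add: uvec_def vvec_def cos_add sin_add)

lemma rot_neg: "rot (- t) p = (p \<bullet> uvec t, p \<bullet> vvec t)"
  by (simp add: rot_def inner_uvec inner_vvec algebra_simps)

lemma rot_zero [simp]: "rot 0 p = p"
  by (simp add: rot_def)

lemma rot_rot: "rot s (rot t p) = rot (s + t) p"
  by (simp add: rot_def cos_add sin_add algebra_simps)

lemma mem_rot_image_iff: "p \<in> rot t ` X \<longleftrightarrow> rot (- t) p \<in> X"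
  by (metis (no_types, opaque_lifting) add.inverse_inverse image_iff left_minus rot_rot rot_zero)

lemma mem_hallway_iff: "q \<in> hallway \<longleftrightarrow> fst q \<le> 1 \<and> snd q \<le> 1 \<and> (0 \<le> fst q \<or> 0 \<le> snd q)"
  by (auto simp: hallway_def LH_def LV_def)

lemma mem_Pset_iff:
  "p \<in> Pset \<omega> \<longleftrightarrow> 0 \<le> snd p \<and> snd p \<le> 1 \<and> 0 \<le> p \<bullet> uvec \<omega> \<and> p \<bullet> uvec \<omega> \<le> 1"
  by (auto simp: Pset_def Hstrip_def Vstrip_def mem_rot_image_iff rot_neg)

lemma mem_LS_iff_hallway:
  "p \<in> LS S t \<longleftrightarrow> rot (- t) p + (1 - supp S t, 1 - supp S (t + pi/2)) \<in> hallway"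
proof -
  define shift where "shift = (supp S t - 1) *\<^sub>R uvec t + (supp S (t + pi/2) - 1) *\<^sub>R vvec t"
  have "rot (- t) (p - shift) = rot (- t) p + (1 - supp S t, 1 - supp S (t + pi/2))"
    by (simp add: rot_neg shift_def inner_diff_left inner_add_left uvec_vvec_orthonormal)
  moreover have "p \<in> LS S t \<longleftrightarrow> p - shift \<in> rot t ` hallway"
    unfolding LS_def shift_def add.assoc
    by (auto intro: image_eqI[where x = "p - shift" for shift])
  ultimately show ?thesis
    by (simp add: mem_rot_image_iff)
qed

lemma mem_LS_iff:
  "p \<in> LS S t \<longleftrightarrow> p \<bullet> uvec t \<le> supp S t \<and> p \<bullet> vvec t \<le> supp S (t + pi/2) \<and>
     (supp S t - 1 \<le> p \<bullet> uvec t \<or> supp S (t + pi/2) - 1 \<le> p \<bullet> vvec t)"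
  by (auto simp: mem_LS_iff_hallway rot_neg mem_hallway_iff)

lemma supp_upper: "bounded S \<Longrightarrow> p \<in> S \<Longrightarrow> p \<bullet> uvec t \<le> supp S t"
  unfolding supp_def by (intro cSup_upper imageI bounded_inner_imp_bdd_above)

lemma supp_add_pi_half_upper: "bounded S \<Longrightarrow> p \<in> S \<Longrightarrow> p \<bullet> vvec t \<le> supp S (t + pi/2)"
  using supp_upper[of S p "t + pi/2"] by (simp add: uvec_add_pi_half)

lemma supp_least: "S \<noteq> {} \<Longrightarrow> (\<And>p. p \<in> S \<Longrightarrow> p \<bullet> uvec t \<le> c) \<Longrightarrow> supp S t \<le> c"
  unfolding supp_def by (intro cSup_least) auto

lemma supp_mono: "bounded T \<Longrightarrow> S \<noteq> {} \<Longrightarrow> S \<subseteq> T \<Longrightarrow> supp S t \<le> supp T t"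
  by (meson subsetD supp_least supp_upper)

lemma supp_attained:
  assumes "compact S" "S \<noteq> {}"
  obtains p where "p \<in> S" "p \<bullet> uvec t = supp S t"
proof -
  obtain p where "p \<in> S" and max: "\<forall>q\<in>S. q \<bullet> uvec t \<le> p \<bullet> uvec t"
    using continuous_attains_sup[OF assms, of "\<lambda>q. q \<bullet> uvec t"] continuous_on_inner
      continuous_on_id continuous_on_const by blast
  have "p \<bullet> uvec t = supp S t"
    using assms max \<open>p \<in> S\<close> by (intro antisym supp_upper supp_least compact_imp_bounded) auto
  with \<open>p \<in> S\<close> show thesis by (rule that)
qed

lemma supp_le_add_norm_diff:
  assumes "S \<noteq> {}" and R: "\<And>p. p \<in> S \<Longrightarrow> norm p \<le> R"
  shows "supp S t \<le> supp S t0 + R * norm (uvec t - uvec t0)"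
proof -
  have "bounded S"
    using R unfolding bounded_iff by blast
  show ?thesis
  proof (rule supp_least[OF assms(1)])
    fix p assume p: "p \<in> S"
    have "p \<bullet> (uvec t - uvec t0) \<le> R * norm (uvec t - uvec t0)"
      using norm_cauchy_schwarz mult_right_mono[OF R[OF p] norm_ge_zero] by (rule order_trans)
    then show "p \<bullet> uvec t \<le> supp S t0 + R * norm (uvec t - uvec t0)"
      using supp_upper[OF \<open>bounded S\<close> p, of t0] by (simp add: inner_diff_right)
  qed
qed

lemma continuous_on_supp:
  assumes "bounded S" "S \<noteq> {}"
  shows "continuous_on X (supp S)"
proof -
  obtain R where R: "\<And>p. p \<in> S \<Longrightarrow> norm p \<le> R"
    using assms(1) unfolding bounded_iff by blast
  have "isCont (supp S) t0" for t0
  proof -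
    have "(uvec \<longlongrightarrow> uvec t0) (at t0)"
      unfolding uvec_def by (intro tendsto_intros)
    then have "((\<lambda>t. R * norm (uvec t - uvec t0)) \<longlongrightarrow> 0) (at t0)"
      by (intro tendsto_mult_right_zero tendsto_norm_zero LIM_zero)
    moreover have "norm (supp S t - supp S t0) \<le> R * norm (uvec t - uvec t0)" for t
      using supp_le_add_norm_diff[OF assms(2) R, of t t0] supp_le_add_norm_diff[OF assms(2) R, of t0 t]
      by (simp add: norm_minus_commute)
    ultimately have "((\<lambda>t. supp S t - supp S t0) \<longlongrightarrow> 0) (at t0)"
      by (metis (mono_tags, lifting) Lim_null_comparison always_eventually)
    then show ?thesis
      unfolding isCont_def by (rule LIM_zero_cancel)
  qed
  then show ?thesis
    by (simp add: continuous_at_imp_continuous_on)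
qed

lemma subset_LS_if_placed_in_hallway:
  assumes "bounded S" "S \<noteq> {}" and placed: "(\<lambda>p. rot (- t) p + x) ` S \<subseteq> hallway"
  shows "S \<subseteq> LS S t"
proof
  fix p assume "p \<in> S"
  have in_hallway: "q \<bullet> uvec t + fst x \<le> 1 \<and> q \<bullet> vvec t + snd x \<le> 1 \<and>
      (0 \<le> q \<bullet> uvec t + fst x \<or> 0 \<le> q \<bullet> vvec t + snd x)" if "q \<in> S" for q
    using placed that by (auto simp: rot_neg mem_hallway_iff)
  have "supp S t \<le> 1 - fst x"
    using in_hallway by (intro supp_least[OF \<open>S \<noteq> {}\<close>]) fastforce
  moreover have "supp S (t + pi/2) \<le> 1 - snd x"
    using in_hallway by (intro supp_least[OF \<open>S \<noteq> {}\<close>]) (fastforce simp: uvec_add_pi_half)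
  ultimately show "p \<in> LS S t"
    using in_hallway[OF \<open>p \<in> S\<close>] supp_upper[OF \<open>bounded S\<close> \<open>p \<in> S\<close>, of t]
      supp_add_pi_half_upper[OF \<open>bounded S\<close> \<open>p \<in> S\<close>, of t]
    unfolding mem_LS_iff by linarith
qed

lemma unit_strip_if_supp_eq_one:
  assumes "bounded S" "S \<noteq> {}" "supp S t = 1"
    and placed: "\<And>p. p \<in> S \<Longrightarrow> 0 \<le> p \<bullet> uvec t + d \<and> p \<bullet> uvec t + d \<le> 1"
    and "p \<in> S"
  shows "0 \<le> p \<bullet> uvec t \<and> p \<bullet> uvec t \<le> 1"
proof -
  have "supp S t \<le> 1 - d"
    using placed by (intro supp_least[OF \<open>S \<noteq> {}\<close>]) fastforce
  then show ?thesis
    using assms supp_upper[OF \<open>bounded S\<close> \<open>p \<in> S\<close>, of t] placed[OF \<open>p \<in> S\<close>] by linarith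
qed

lemma moving_sofaD:
  "moving_sofa S \<omega> \<Longrightarrow> connected S \<and> S \<noteq> {} \<and> compact S"
  by (simp add: moving_sofa_def)

lemma moving_sofaE:
  assumes "moving_sofa S \<omega>"
  obtains \<theta> :: "real \<Rightarrow> real" and x :: "real \<Rightarrow> pt"
  where "continuous_on {0..1} \<theta>" "\<theta> 0 = 0" "\<theta> 1 = \<omega>"
    "\<And>s. s \<in> {0..1} \<Longrightarrow> (\<lambda>p. rot (- \<theta> s) p + x s) ` S \<subseteq> hallway"
    "(\<lambda>p. p + x 0) ` S \<subseteq> LH" "(\<lambda>p. rot (- \<omega>) p + x 1) ` S \<subseteq> LV"
  using assms unfolding moving_sofa_def by fastforce

lemma moving_sofa_subset_LS:
  assumes "moving_sofa S \<omega>" "t \<in> {0..\<omega>}"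
  shows "S \<subseteq> LS S t"
proof -
  obtain \<theta> :: "real \<Rightarrow> real" and x :: "real \<Rightarrow> pt" where "continuous_on {0..1} \<theta>" "\<theta> 0 = 0" "\<theta> 1 = \<omega>"
    and motion: "\<And>s. s \<in> {0..1} \<Longrightarrow> (\<lambda>p. rot (- \<theta> s) p + x s) ` S \<subseteq> hallway"
    and "(\<lambda>p. p + x 0) ` S \<subseteq> LH" "(\<lambda>p. rot (- \<omega>) p + x 1) ` S \<subseteq> LV"
    using assms(1) by (rule moving_sofaE) (rule that)
  obtain s where "s \<in> {0..1}" "\<theta> s = t"
    using IVT'[of \<theta> 0 t 1] assms(2) \<open>continuous_on {0..1} \<theta>\<close> \<open>\<theta> 0 = 0\<close> \<open>\<theta> 1 = \<omega>\<close> by auto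
  with motion show ?thesis
    using moving_sofaD[OF assms(1)]
    by (metis subset_LS_if_placed_in_hallway compact_imp_bounded)
qed

lemma moving_sofa_subset_Pset:
  assumes "moving_sofa S \<omega>" "standard_position S \<omega>"
  shows "S \<subseteq> Pset \<omega>"
proof -
  obtain \<theta> :: "real \<Rightarrow> real" and x :: "real \<Rightarrow> pt" where "continuous_on {0..1} \<theta>" "\<theta> 0 = 0" "\<theta> 1 = \<omega>"
    and "\<And>s. s \<in> {0..1} \<Longrightarrow> (\<lambda>p. rot (- \<theta> s) p + x s) ` S \<subseteq> hallway"
    and start: "(\<lambda>p. p + x 0) ` S \<subseteq> LH" and finish: "(\<lambda>p. rot (- \<omega>) p + x 1) ` S \<subseteq> LV"
    using assms(1) by (rule moving_sofaE) (rule that)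
  have "S \<noteq> {}" "bounded S"
    using moving_sofaD[OF assms(1)] compact_imp_bounded by auto
  have "supp S (pi/2) = 1" "supp S \<omega> = 1"
    using assms(2) by (simp_all add: standard_position_def)
  have "p \<in> Pset \<omega>" if "p \<in> S" for p
  proof -
    have "0 \<le> p \<bullet> uvec (pi/2) \<and> p \<bullet> uvec (pi/2) \<le> 1"
      using start
      by (intro unit_strip_if_supp_eq_one[OF \<open>bounded S\<close> \<open>S \<noteq> {}\<close> \<open>supp S (pi/2) = 1\<close> _ \<open>p \<in> S\<close>,
            of "snd (x 0)"])
        (auto simp: LH_def inner_uvec)
    moreover have "0 \<le> p \<bullet> uvec \<omega> \<and> p \<bullet> uvec \<omega> \<le> 1"
      using finish
      by (intro unit_strip_if_supp_eq_one[OF \<open>bounded S\<close> \<open>S \<noteq> {}\<close> \<open>supp S \<omega> = 1\<close> _ \<open>p \<in> S\<close>,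
            of "fst (x 1)"])
        (auto simp: LV_def rot_neg)
    ultimately show ?thesis
      by (simp add: mem_Pset_iff inner_uvec)
  qed
  then show ?thesis ..
qed

lemma moving_sofa_subset_Msofa:
  "moving_sofa S \<omega> \<Longrightarrow> standard_position S \<omega> \<Longrightarrow> S \<subseteq> Msofa S \<omega>"
  unfolding Msofa_def using moving_sofa_subset_LS moving_sofa_subset_Pset by blast

lemma closed_LS: "closed (LS S t)"
proof -
  have "LS S t = {p. p \<bullet> uvec t \<le> supp S t \<and> p \<bullet> vvec t \<le> supp S (t + pi/2) \<and>
      (supp S t - 1 \<le> p \<bullet> uvec t \<or> supp S (t + pi/2) - 1 \<le> p \<bullet> vvec t)}"
    by (auto simp: mem_LS_iff)
  also have "closed \<dots>"
    by (intro closed_Collect_conj closed_Collect_disj closed_Collect_le continuous_intros)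
  finally show ?thesis .
qed

lemma closed_Pset: "closed (Pset \<omega>)"
proof -
  have "Pset \<omega> = {p. 0 \<le> snd p \<and> snd p \<le> 1 \<and> 0 \<le> p \<bullet> uvec \<omega> \<and> p \<bullet> uvec \<omega> \<le> 1}"
    by (auto simp: mem_Pset_iff)
  also have "closed \<dots>"
    by (intro closed_Collect_conj closed_Collect_le continuous_intros)
  finally show ?thesis .
qed

lemma convex_Pset: "convex (Pset \<omega>)"
proof -
  have strips: "Hstrip = UNIV \<times> {0..1}" "Vstrip = {0..1} \<times> UNIV"
    by (auto simp: Hstrip_def Vstrip_def)
  have "linear (rot \<omega>)"
    by (auto intro!: linearI simp: rot_def algebra_simps)
  then show ?thesis
    unfolding Pset_def strips by (intro convex_Int convex_linear_image convex_Times convex_UNIV convex_real_interval)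
qed

lemma Msofa_subset_box:
  assumes "0 < \<omega>" "\<omega> \<le> pi/2"
  shows "Msofa S \<omega> \<subseteq> {- supp S (\<omega> + pi/2) / sin \<omega> .. supp S 0} \<times> {0..1}"
proof
  fix m assume "m \<in> Msofa S \<omega>"
  then have "m \<in> Pset \<omega>" "m \<in> LS S 0" "m \<in> LS S \<omega>"
    using assms(1) by (auto simp: Msofa_def)
  then have "0 \<le> snd m" "snd m \<le> 1" "fst m \<le> supp S 0" "m \<bullet> vvec \<omega> \<le> supp S (\<omega> + pi/2)"
    by (auto simp: mem_Pset_iff mem_LS_iff inner_uvec)
  moreover have "0 < sin \<omega>" "0 \<le> cos \<omega>"
    using assms by (auto intro!: sin_gt_zero cos_ge_zero)
  ultimately have "- fst m * sin \<omega> \<le> supp S (\<omega> + pi/2)"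
    using mult_nonneg_nonneg[of "snd m" "cos \<omega>"] unfolding inner_vvec by linarith
  then have "- supp S (\<omega> + pi/2) / sin \<omega> \<le> fst m"
    using \<open>0 < sin \<omega>\<close> by (simp add: field_simps)
  with \<open>0 \<le> snd m\<close> \<open>snd m \<le> 1\<close> \<open>fst m \<le> supp S 0\<close>
  show "m \<in> {- supp S (\<omega> + pi/2) / sin \<omega> .. supp S 0} \<times> {0..1}"
    by (cases m) auto
qed

lemma compact_Msofa:
  assumes "0 < \<omega>" "\<omega> \<le> pi/2"
  shows "compact (Msofa S \<omega>)"
proof -
  have "bounded (Msofa S \<omega>)"
    using bounded_Times[OF bounded_closed_interval bounded_closed_interval] Msofa_subset_box[OF assms]
    by (rule bounded_subset)
  moreover have "closed (Msofa S \<omega>)"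
    unfolding Msofa_def by (intro closed_Int closed_Pset closed_INT ballI closed_LS)
  ultimately show ?thesis
    by (simp add: compact_eq_bounded_closed)
qed

lemma connected_exists_not_opposite:
  fixes f g :: "'a::topological_space \<Rightarrow> real"
  assumes "connected S" "continuous_on S f" "continuous_on S g"
    and "p \<in> S" "a \<le> f p" and "q \<in> S" "b \<le> g q"
  shows "\<exists>z\<in>S. \<not> (a < f z \<and> g z < b) \<and> \<not> (f z < a \<and> b < g z)"
proof (rule ccontr)
  define Q1 where "Q1 = {y :: real \<times> real. a < fst y \<and> snd y < b}"
  define Q2 where "Q2 = {y :: real \<times> real. fst y < a \<and> b < snd y}"
  let ?T = "(\<lambda>z. (f z, g z)) ` S"
  assume "\<not> ?thesis"
  then have "?T \<subseteq> Q1 \<union> Q2"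
    by (auto simp: Q1_def Q2_def)
  moreover have "connected ?T"
    using assms by (intro connected_continuous_image continuous_on_Pair)
  moreover have "open Q1" "open Q2"
    unfolding Q1_def Q2_def by (intro open_Collect_conj open_Collect_less continuous_intros)+
  moreover have "Q1 \<inter> Q2 \<inter> ?T = {}"
    by (auto simp: Q1_def Q2_def)
  ultimately have "?T \<subseteq> Q2 \<or> ?T \<subseteq> Q1"
    using connectedD[of ?T Q1 Q2] by blast
  then show False
    using assms(4-7) by (auto simp: Q1_def Q2_def)
qed

lemma inner_uvec_vvec_nonneg:
  assumes "0 \<le> t" "t \<le> \<omega>" "\<omega> \<le> pi/2" "0 < w \<bullet> uvec 0" "0 \<le> w \<bullet> vvec \<omega>"
  shows "0 \<le> w \<bullet> uvec t \<and> 0 \<le> w \<bullet> vvec t"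
proof -
  have "0 \<le> cos t" "0 \<le> sin t" "0 \<le> sin \<omega>" "0 \<le> sin (\<omega> - t)"
    using assms(1-3) by (auto intro!: cos_ge_zero sin_ge_zero)
  have "\<omega> \<noteq> pi/2"
  proof
    assume "\<omega> = pi/2"
    then have "w \<bullet> vvec \<omega> = - (w \<bullet> uvec 0)"
      by (simp only:) (simp add: inner_uvec inner_vvec)
    with assms(4,5) show False
      by simp
  qed
  then have "0 < cos \<omega>"
    using assms(1-3) by (intro cos_gt_zero_pi) auto
  have "fst w * sin \<omega> \<le> snd w * cos \<omega>"
    using assms(5) by (simp add: inner_vvec)
  moreover have "0 < fst w"
    using assms(4) by (simp add: inner_uvec)
  ultimately have "0 \<le> snd w * cos \<omega>"
    using mult_nonneg_nonneg[of "fst w" "sin \<omega>"] \<open>0 \<le> sin \<omega>\<close> by linarith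
  then have "0 \<le> snd w"
    using \<open>0 < cos \<omega>\<close> by (simp add: zero_le_mult_iff)
  then have "0 \<le> w \<bullet> uvec t"
    using assms(4) \<open>0 \<le> cos t\<close> \<open>0 \<le> sin t\<close> by (simp add: inner_uvec)
  have "cos \<omega> * (w \<bullet> vvec t) = (w \<bullet> uvec 0) * sin (\<omega> - t) + cos t * (w \<bullet> vvec \<omega>)"
    by (simp add: inner_uvec inner_vvec sin_diff algebra_simps)
  then have "0 \<le> cos \<omega> * (w \<bullet> vvec t)"
    using assms(4,5) \<open>0 \<le> cos t\<close> \<open>0 \<le> sin (\<omega> - t)\<close> by simp
  then have "0 \<le> w \<bullet> vvec t"
    using \<open>0 < cos \<omega>\<close> by (simp add: zero_le_mult_iff)
  with \<open>0 \<le> w \<bullet> uvec t\<close> show ?thesis ..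
qed

lemma inner_uvec_vvec_same_sign:
  assumes "0 \<le> t" "t \<le> \<omega>" "\<omega> \<le> pi/2"
    and "\<not> (0 < w \<bullet> uvec 0 \<and> w \<bullet> vvec \<omega> < 0)" "\<not> (w \<bullet> uvec 0 < 0 \<and> 0 < w \<bullet> vvec \<omega>)"
  shows "(0 \<le> w \<bullet> uvec t \<and> 0 \<le> w \<bullet> vvec t) \<or> (w \<bullet> uvec t \<le> 0 \<and> w \<bullet> vvec t \<le> 0)"
proof (cases "w \<bullet> uvec 0" "0 :: real" rule: linorder_cases)
  case less
  then show ?thesis
    using inner_uvec_vvec_nonneg[OF assms(1-3), of "- w"] assms(5) by simp
next
  case equal
  moreover have "0 \<le> sin t" "0 \<le> cos t"
    using assms(1-3) by (auto intro!: sin_ge_zero cos_ge_zero)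
  ultimately show ?thesis
    by (cases "0 \<le> snd w") (auto simp: inner_uvec inner_vvec mult_nonpos_nonneg)
next
  case greater
  then show ?thesis
    using inner_uvec_vvec_nonneg[OF assms(1-3), of w] assms(4) by simp
qed

lemma closed_segment_subset_LS:
  assumes "m \<in> LS S t" "z \<in> LS S t" "0 \<le> (z - m) \<bullet> uvec t" "0 \<le> (z - m) \<bullet> vvec t"
  shows "closed_segment m z \<subseteq> LS S t"
proof -
  define C where "C = {q. q \<bullet> uvec t \<le> supp S t} \<inter> {q. q \<bullet> vvec t \<le> supp S (t + pi/2)} \<inter>
    {q. m \<bullet> uvec t \<le> q \<bullet> uvec t} \<inter> {q. m \<bullet> vvec t \<le> q \<bullet> vvec t}"
  have "convex C"
    unfolding C_def inner_commute[of _ "uvec t"] inner_commute[of _ "vvec t"]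
    by (intro convex_Int convex_halfspace_le convex_halfspace_ge)
  moreover have "m \<in> C" "z \<in> C"
    using assms by (auto simp: C_def mem_LS_iff inner_diff_left)
  ultimately have "closed_segment m z \<subseteq> C"
    by (rule closed_segment_subset[rotated 2])
  moreover have "C \<subseteq> LS S t"
    using assms(1) by (auto simp: C_def mem_LS_iff)
  ultimately show ?thesis
    by blast
qed

lemma closed_segment_subset_Msofa:
  assumes "m \<in> Msofa S \<omega>" "z \<in> Msofa S \<omega>" "\<omega> \<le> pi/2"
    and "\<not> (0 < (z - m) \<bullet> uvec 0 \<and> (z - m) \<bullet> vvec \<omega> < 0)"
    and "\<not> ((z - m) \<bullet> uvec 0 < 0 \<and> 0 < (z - m) \<bullet> vvec \<omega>)"
  shows "closed_segment m z \<subseteq> Msofa S \<omega>"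
proof -
  have "closed_segment m z \<subseteq> Pset \<omega>"
    using assms(1,2) convex_Pset by (intro closed_segment_subset) (auto simp: Msofa_def)
  moreover have "closed_segment m z \<subseteq> LS S t" if "t \<in> {0..\<omega>}" for t
  proof -
    have "m \<in> LS S t" "z \<in> LS S t"
      using assms(1,2) that by (auto simp: Msofa_def)
    moreover have "(0 \<le> (z - m) \<bullet> uvec t \<and> 0 \<le> (z - m) \<bullet> vvec t) \<or>
        ((m - z) \<bullet> uvec t \<ge> 0 \<and> (m - z) \<bullet> vvec t \<ge> 0)"
      using inner_uvec_vvec_same_sign[of t \<omega> "z - m"] that assms(3-5)
      by (auto simp: inner_diff_left)
    ultimately show ?thesis
      using closed_segment_subset_LS closed_segment_commute by metis
  qed
  ultimately show ?thesis
    unfolding Msofa_def by blast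
qed

lemma Msofa_segment_to_sofa:
  assumes "connected S" "compact S" "S \<noteq> {}" "S \<subseteq> Msofa S \<omega>" "0 < \<omega>" "\<omega> \<le> pi/2"
    and "m \<in> Msofa S \<omega>"
  shows "\<exists>z\<in>S. closed_segment m z \<subseteq> Msofa S \<omega>"
proof -
  obtain p where "p \<in> S" "p \<bullet> uvec 0 = supp S 0"
    using assms(2,3) by (rule supp_attained)
  obtain q where "q \<in> S" "q \<bullet> uvec (\<omega> + pi/2) = supp S (\<omega> + pi/2)"
    using assms(2,3) by (rule supp_attained)
  have "m \<in> LS S 0" "m \<in> LS S \<omega>"
    using assms(5,7) by (auto simp: Msofa_def)
  then have "m \<bullet> uvec 0 \<le> p \<bullet> uvec 0" "m \<bullet> vvec \<omega> \<le> q \<bullet> vvec \<omega>"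
    using \<open>p \<bullet> uvec 0 = supp S 0\<close> \<open>q \<bullet> uvec (\<omega> + pi/2) = supp S (\<omega> + pi/2)\<close>
    by (auto simp: mem_LS_iff uvec_add_pi_half)
  moreover have "continuous_on S (\<lambda>z. z \<bullet> uvec 0)" "continuous_on S (\<lambda>z. z \<bullet> vvec \<omega>)"
    by (intro continuous_intros)+
  ultimately obtain z where "z \<in> S"
    and "\<not> (m \<bullet> uvec 0 < z \<bullet> uvec 0 \<and> z \<bullet> vvec \<omega> < m \<bullet> vvec \<omega>)"
    and "\<not> (z \<bullet> uvec 0 < m \<bullet> uvec 0 \<and> m \<bullet> vvec \<omega> < z \<bullet> vvec \<omega>)"
    using connected_exists_not_opposite[OF assms(1) _ _ \<open>p \<in> S\<close> _ \<open>q \<in> S\<close>] by blast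
  then have "closed_segment m z \<subseteq> Msofa S \<omega>"
    using assms(4,6,7) by (intro closed_segment_subset_Msofa) (auto simp: inner_diff_left)
  with \<open>z \<in> S\<close> show ?thesis ..
qed

lemma connected_if_segments_to_connected_subset:
  fixes M :: "'a::real_normed_vector set"
  assumes "connected S" "S \<subseteq> M" and segments: "\<And>m. m \<in> M \<Longrightarrow> \<exists>z\<in>S. closed_segment m z \<subseteq> M"
  shows "connected M"
proof -
  define B where "B = {closed_segment m z | m z. z \<in> S \<and> closed_segment m z \<subseteq> M}"
  have "connected (S \<union> \<Union>B)"
    by (rule connected_Un_UN) (auto simp: B_def assms(1))
  moreover have "S \<union> \<Union>B = M"
    using assms(2) segments by (fastforce simp: B_def)
  ultimately show ?thesis
    by simp
qed

lemma connected_Msofa: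
  assumes "connected S" "compact S" "S \<noteq> {}" "S \<subseteq> Msofa S \<omega>" "0 < \<omega>" "\<omega> \<le> pi/2"
  shows "connected (Msofa S \<omega>)"
  using assms(1,4) by (rule connected_if_segments_to_connected_subset) (rule Msofa_segment_to_sofa[OF assms])

lemma moving_sofa_if_subset_Msofa:
  assumes "connected M" "compact M" "M \<noteq> {}" "M \<subseteq> Msofa S \<omega>"
    and "bounded S" "S \<noteq> {}" "standard_position S \<omega>" "0 \<le> \<omega>"
  shows "moving_sofa M \<omega>"
proof -
  define \<theta> where "\<theta> s = s * \<omega>" for s :: real
  define x where "x s = (1 - supp S (\<theta> s), 1 - supp S (\<theta> s + pi/2))" for s
  have "continuous_on {0..1} \<theta>"
    unfolding \<theta>_def by (intro continuous_intros)
  moreover have "continuous_on {0..1} x"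
    unfolding x_def \<theta>_def
    by (intro continuous_intros continuous_on_compose2[OF continuous_on_supp[OF assms(5,6)]]) auto
  moreover have "(\<lambda>p. rot (- \<theta> s) p + x s) ` M \<subseteq> hallway" if "s \<in> {0..1}" for s
  proof -
    have "\<theta> s \<in> {0..\<omega>}"
      using that assms(8) by (auto simp: \<theta>_def mult_left_le_one_le)
    then show ?thesis
      using assms(4) by (auto simp: Msofa_def x_def mem_LS_iff_hallway)
  qed
  moreover have "M \<subseteq> LS S 0" "M \<subseteq> LS S \<omega>" "M \<subseteq> Pset \<omega>"
    using assms(4,8) by (auto simp: Msofa_def)
  then have "(\<lambda>p. rot (- \<theta> 0) p + x 0) ` M \<subseteq> LH" "(\<lambda>p. rot (- \<theta> 1) p + x 1) ` M \<subseteq> LV"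
    using assms(7) by (auto simp: \<theta>_def x_def LH_def LV_def mem_LS_iff mem_Pset_iff standard_position_def
        rot_neg inner_uvec)
  ultimately show ?thesis
    using assms(1-3) unfolding moving_sofa_def
    by (intro conjI exI[of _ \<theta>] exI[of _ x]) (auto simp: \<theta>_def)
qed

lemma standard_position_between:
  assumes "bounded M" "S \<noteq> {}" "S \<subseteq> M" "M \<subseteq> Pset \<omega>" "standard_position S \<omega>"
  shows "standard_position M \<omega>"
proof -
  have "supp M t = 1" if "supp S t = 1" "\<And>p. p \<in> M \<Longrightarrow> p \<bullet> uvec t \<le> 1" for t
  proof (rule antisym)
    show "supp M t \<le> 1"
      using that(2) assms(2,3) by (intro supp_least) auto
    show "1 \<le> supp M t"
      using supp_mono[OF assms(1-3)] that(1) by metis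
  qed
  moreover have "p \<bullet> uvec \<omega> \<le> 1" "p \<bullet> uvec (pi/2) \<le> 1" if "p \<in> M" for p
    using assms(4) that by (auto simp: mem_Pset_iff inner_uvec)
  ultimately show ?thesis
    using assms(5) by (simp add: standard_position_def)
qed

theorem theorem3p8:
  fixes S :: "(real \<times> real) set" and \<omega> :: real
  assumes "0 < \<omega>" and "\<omega> \<le> pi/2"
    and "moving_sofa S \<omega>" and "standard_position S \<omega>"
  shows "moving_sofa (Msofa S \<omega>) \<omega> \<and> standard_position (Msofa S \<omega>) \<omega> \<and> S \<subseteq> Msofa S \<omega>"
proof -
  have "connected S" "S \<noteq> {}" "compact S"
    using moving_sofaD[OF assms(3)] by auto
  have sofa_inside: "S \<subseteq> Msofa S \<omega>"
    using assms(3,4) by (rule moving_sofa_subset_Msofa)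
  have "compact (Msofa S \<omega>)"
    using assms(1,2) by (rule compact_Msofa)
  moreover have "connected (Msofa S \<omega>)"
    using \<open>connected S\<close> \<open>compact S\<close> \<open>S \<noteq> {}\<close> sofa_inside assms(1,2) by (rule connected_Msofa)
  moreover have "Msofa S \<omega> \<subseteq> Pset \<omega>"
    by (simp add: Msofa_def)
  ultimately show ?thesis
    using moving_sofa_if_subset_Msofa[of "Msofa S \<omega>" S \<omega>] standard_position_between[of "Msofa S \<omega>" S \<omega>]
      sofa_inside \<open>S \<noteq> {}\<close> \<open>compact S\<close> assms(1,4) compact_imp_bounded by auto
qed

end
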